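(* Let $F$ be a field of characteristic zero. Every derivation of the Lie algebra $W^*(1,0)$ can be written as a sum of an inner derivation and a scalar derivation.
   Context: $W^*(1,0)$ is the Lie algebra over $F$ with basis $\{e^{ax}x^i\partial: a\in\mathbb Z, i\in\mathbb N\}$ ($\mathbb N$ the nonnegative integers), viewed as vector fields $f\partial$ with $f$ in the $F$-algebra $F[e^{\pm x},x]$ (basis $e^{ax}x^i$, multiplication adding exponents, $\partial(e^{ax}x^i)=ae^{ax}x^i+ie^{ax}x^{i-1}$), with bracket $[f\partial,g\partial]=(f\partial(g)-g\partial(f))\partial$. A derivation of a Lie algebra $L$ is a linear map $D:L\to L$ with $D([l_1,l_2])=[D(l_1),l_2]+[l_1,D(l_2)]$. A derivation $D$ is a scalar derivation if for every basis element $l$ (here $l=e^{ax}x^i\partial$) one has $D(l)=f_l\,l$ for some scalar $f_l\in F$ depending on $l$. *)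

theory Defs
  imports "HOL-Library.Poly_Mapping" "HOL-Library.Product_Plus"
begin

text \<open>The algebra F[e^{\<pm>x},x]: the basis element e^{ax}x^i is the key (a,i);
  multiplication is the convolution product of Poly_Mapping (exponents add).
  An element f of W^*(1,0) is identified with the coefficient function f of f\<partial>.\<close>

type_synonym 'a Wstar = "(int \<times> nat) \<Rightarrow>\<^sub>0 'a"

definition Wbasis :: "int \<Rightarrow> nat \<Rightarrow> 'a::field Wstar" where
  "Wbasis a i = Poly_Mapping.single (a, i) 1"

definition Wsmult :: "'a::field \<Rightarrow> 'a Wstar \<Rightarrow> 'a Wstar" where
  "Wsmult c f = Poly_Mapping.map (\<lambda>x. c * x) f"

text \<open>The derivation d/dx: d(e^{ax}x^i) = a e^{ax}x^i + i e^{ax}x^{i-1}.\<close>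
definition Wderiv :: "'a::field Wstar \<Rightarrow> 'a Wstar" where
  "Wderiv f = (\<Sum>k\<in>Poly_Mapping.keys f. case k of (a, i) \<Rightarrow>
      Poly_Mapping.single (a, i) (of_int a * Poly_Mapping.lookup f (a, i))
    + Poly_Mapping.single (a, i - 1) (of_nat i * Poly_Mapping.lookup f (a, i)))"

text \<open>Lie bracket [f\<partial>, g\<partial>] = (f \<partial>(g) - g \<partial>(f))\<partial>.\<close>
definition Wbracket :: "'a::field Wstar \<Rightarrow> 'a Wstar \<Rightarrow> 'a Wstar" where
  "Wbracket f g = f * Wderiv g - g * Wderiv f"

definition is_derivation :: "('a::field Wstar \<Rightarrow> 'a Wstar) \<Rightarrow> bool" where
  "is_derivation D \<longleftrightarrow>
     (\<forall>u v. D (u + v) = D u + D v) \<and>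
     (\<forall>c u. D (Wsmult c u) = Wsmult c (D u)) \<and>
     (\<forall>u v. D (Wbracket u v) = Wbracket (D u) v + Wbracket u (D v))"

definition is_inner_derivation :: "('a::field Wstar \<Rightarrow> 'a Wstar) \<Rightarrow> bool" where
  "is_inner_derivation D \<longleftrightarrow> (\<exists>u. D = Wbracket u)"

definition is_scalar_derivation :: "('a::field Wstar \<Rightarrow> 'a Wstar) \<Rightarrow> bool" where
  "is_scalar_derivation D \<longleftrightarrow> is_derivation D \<and>
     (\<forall>a i. \<exists>c. D (Wbasis a i) = Wsmult c (Wbasis a i))"

end

theory Submission
  imports Defs
begin

text \<open>Over a field of characteristic zero \<partial> = ad 1 is onto, so subtracting ad u with \<partial>u = -D(1)
  leaves a derivation E with E(1) = 0, i.e. one commuting with \<partial>. Hence E preserves the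
  eigenspaces of \<partial>; the one for the eigenvalue a is spanned by e^(ax), so E(e^(ax)) = \<mu>(a) e^(ax),
  and E(x) = k is a constant. Applying E to [e^(ax), e^(bx)] = (b - a) e^((a+b)x) shows that \<mu> is
  additive on distinct arguments, hence \<mu>(a) = a \<mu>(1). The elements e^(ax) and x generate the
  algebra, and on them E agrees with \<mu>(1) deg + k (\<partial> - deg), where deg(e^(ax) x^i) = a e^(ax) x^i
  is a scalar derivation. Since k \<partial> = ad k, this gives D = ad(u + k) + (\<mu>(1) - k) deg.\<close>

lemma lookup_Wsmult [simp]: "Poly_Mapping.lookup (Wsmult c f) k = c * Poly_Mapping.lookup f k"
  by (simp add: Wsmult_def map.rep_eq when_def)

lemma Wsmult_conv_mult: "Wsmult c f = Poly_Mapping.single 0 c * f"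
  by (simp add: Wsmult_def mult_map_scale_conv_mult)

lemma Wsmult_add_right [simp]: "Wsmult c (f + g) = Wsmult c f + Wsmult c g"
  by (rule poly_mapping_eqI) (simp add: lookup_add algebra_simps)

lemma Wsmult_add_left: "Wsmult (c + d) f = Wsmult c f + Wsmult d f"
  by (rule poly_mapping_eqI) (simp add: lookup_add algebra_simps)

lemma Wsmult_diff_right [simp]: "Wsmult c (f - g) = Wsmult c f - Wsmult c g"
  by (rule poly_mapping_eqI) (simp add: lookup_minus algebra_simps)

lemma Wsmult_diff_left: "Wsmult (c - d) f = Wsmult c f - Wsmult d f"
  by (rule poly_mapping_eqI) (simp add: lookup_minus algebra_simps)

lemma Wsmult_zero [simp]: "Wsmult 0 f = 0" "Wsmult c 0 = 0"
  by (rule poly_mapping_eqI, simp)+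

lemma Wsmult_one [simp]: "Wsmult 1 f = f"
  by (rule poly_mapping_eqI) simp

lemma Wsmult_Wsmult [simp]: "Wsmult c (Wsmult d f) = Wsmult (c * d) f"
  by (rule poly_mapping_eqI) simp

lemma Wsmult_mult_left [simp]: "Wsmult c f * g = Wsmult c (f * g)"
  by (simp add: Wsmult_conv_mult mult.assoc)

lemma Wsmult_mult_right [simp]: "f * Wsmult c g = Wsmult c (f * g)"
  by (simp add: Wsmult_conv_mult mult.left_commute)

lemma Wsmult_eq_0_iff: "Wsmult c f = 0 \<longleftrightarrow> c = 0 \<or> f = 0"
  by (auto simp: poly_mapping_eq_iff fun_eq_iff)

lemma lookup_Wbasis: "Poly_Mapping.lookup (Wbasis a i) k = (if k = (a, i) then 1 else 0)"
  by (simp add: Wbasis_def lookup_single when_def)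

lemma Wbasis_mult [simp]: "Wbasis a i * Wbasis b j = Wbasis (a + b) (i + j)"
  by (simp add: Wbasis_def mult_single)

lemma Wbasis_0_0: "Wbasis 0 0 = 1"
  by (simp add: Wbasis_def zero_prod_def[symmetric])

lemma single_eq_Wsmult_Wbasis: "Poly_Mapping.single (a, i) c = Wsmult c (Wbasis a i)"
  by (rule poly_mapping_eqI) (simp add: lookup_Wbasis lookup_single when_def)

lemma Wstar_induct [case_names zero add_basis]:
  assumes "P 0" and "\<And>f a i c. P f \<Longrightarrow> P (f + Wsmult c (Wbasis a i))"
  shows "P f"
proof (induction f rule: update_induct)
  case const
  show ?case by (rule assms(1))
next
  case (update f k c)
  have "Poly_Mapping.update k c f = f + Poly_Mapping.single k c"
    using update.hyps(1)
    by (intro poly_mapping_eqI) (auto simp: lookup_update lookup_add lookup_single when_def in_keys_iff)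
  with update.IH show ?case
    by (cases k) (simp add: single_eq_Wsmult_Wbasis assms(2))
qed

lemma lookup_Wderiv:
  "Poly_Mapping.lookup (Wderiv f) (b, j) =
     of_int b * Poly_Mapping.lookup f (b, j) + of_nat (Suc j) * Poly_Mapping.lookup f (b, Suc j)"
proof -
  have "Poly_Mapping.lookup (Wderiv f) (b, j) =
    (\<Sum>k\<in>Poly_Mapping.keys f. (if k = (b, j) then of_int b * Poly_Mapping.lookup f k else 0)
       + (if k = (b, Suc j) then of_nat (Suc j) * Poly_Mapping.lookup f k else 0))"
    unfolding Wderiv_def lookup_sum
    by (rule sum.cong) (auto simp: lookup_add lookup_single when_def split: prod.splits nat_diff_split)
  then show ?thesis
    by (simp add: sum.distrib sum.delta in_keys_iff)
qed

lemma Wderiv_add [simp]: "Wderiv (f + g) = Wderiv f + Wderiv g"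
  by (rule poly_mapping_eqI) (auto simp: lookup_Wderiv lookup_add algebra_simps)

lemma Wderiv_Wsmult [simp]: "Wderiv (Wsmult c f) = Wsmult c (Wderiv f)"
  by (rule poly_mapping_eqI) (auto simp: lookup_Wderiv algebra_simps)

lemma Wderiv_zero [simp]: "Wderiv 0 = 0"
  by (rule poly_mapping_eqI) (auto simp: lookup_Wderiv)

lemma Wderiv_diff [simp]: "Wderiv (f - g) = Wderiv f - Wderiv g"
  by (rule poly_mapping_eqI) (auto simp: lookup_Wderiv lookup_minus algebra_simps)

lemma Wderiv_Wbasis:
  "Wderiv (Wbasis a i) = Wsmult (of_int a) (Wbasis a i) + Wsmult (of_nat i) (Wbasis a (i - 1))"
  by (rule poly_mapping_eqI) (cases i; auto simp: lookup_Wderiv lookup_add lookup_Wbasis split: if_splits)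

lemma Wderiv_one [simp]: "Wderiv 1 = 0"
  using Wderiv_Wbasis[of 0 0] by (simp add: Wbasis_0_0)

lemma Wstar_Leibniz_rule:
  assumes add: "\<And>f g. T (f + g) = T f + T g"
    and smult: "\<And>c f. T (Wsmult c f) = Wsmult c (T f)"
    and basis: "\<And>a i b j. T (Wbasis a i * Wbasis b j) = Wbasis a i * T (Wbasis b j) + T (Wbasis a i) * Wbasis b j"
  shows "T (f * g) = f * T g + T f * g"
proof -
  have zero: "T 0 = 0"
    using add[of 0 0] by simp
  have basis_right: "T (f * Wbasis b j) = f * T (Wbasis b j) + T f * Wbasis b j" for b j
  proof (induction f rule: Wstar_induct)
    case (add_basis f a i c)
    then show ?case
      using basis[of a i b j] by (simp add: add smult distrib_left distrib_right del: Wbasis_mult)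
  qed (simp add: zero)
  show ?thesis
  proof (induction g rule: Wstar_induct)
    case (add_basis g b j d)
    then show ?case
      using basis_right[of b j] by (simp add: add smult algebra_simps del: Wbasis_mult)
  qed (simp add: zero)
qed

lemma Wderiv_mult: "Wderiv (f * g) = f * Wderiv g + Wderiv f * g"
  by (rule Wstar_Leibniz_rule)
    (auto intro!: poly_mapping_eqI simp: Wderiv_Wbasis lookup_add lookup_Wbasis algebra_simps split: nat_diff_split)

lemma Wbracket_add_left [simp]: "Wbracket (u + v) w = Wbracket u w + Wbracket v w"
  by (simp add: Wbracket_def algebra_simps)

lemma Wbracket_add_right [simp]: "Wbracket w (u + v) = Wbracket w u + Wbracket w v"
  by (simp add: Wbracket_def algebra_simps)

lemma Wbracket_diff_left [simp]: "Wbracket (u - v) w = Wbracket u w - Wbracket v w"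
  by (simp add: Wbracket_def algebra_simps)

lemma Wbracket_diff_right [simp]: "Wbracket w (u - v) = Wbracket w u - Wbracket w v"
  by (simp add: Wbracket_def algebra_simps)

lemma Wbracket_Wsmult_left [simp]: "Wbracket (Wsmult c u) w = Wsmult c (Wbracket u w)"
  by (simp add: Wbracket_def)

lemma Wbracket_Wsmult_right [simp]: "Wbracket w (Wsmult c u) = Wsmult c (Wbracket w u)"
  by (simp add: Wbracket_def)

lemma Wbracket_zero [simp]: "Wbracket 0 w = 0" "Wbracket w 0 = 0"
  by (simp_all add: Wbracket_def)

lemma Wbracket_one_left: "Wbracket 1 v = Wderiv v"
  by (simp add: Wbracket_def)

lemma Wbracket_Wbasis:
  "Wbracket (Wbasis a i) (Wbasis b j) =
    Wsmult (of_int (b - a)) (Wbasis (a + b) (i + j)) + Wsmult (of_nat j - of_nat i) (Wbasis (a + b) (i + j - 1))"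
  by (rule poly_mapping_eqI)
    (cases i; cases j; auto simp: Wbracket_def Wderiv_Wbasis lookup_add lookup_minus lookup_Wbasis algebra_simps)

lemma Wbracket_jacobi:
  "Wbracket u (Wbracket v w) = Wbracket (Wbracket u v) w + Wbracket v (Wbracket u w)"
  by (simp add: Wbracket_def Wderiv_mult algebra_simps)

definition Wdeg :: "'a::field Wstar \<Rightarrow> 'a Wstar" where
  "Wdeg f = Poly_Mapping.mapp (\<lambda>k c. of_int (fst k) * c) f"

lemma lookup_Wdeg: "Poly_Mapping.lookup (Wdeg f) k = of_int (fst k) * Poly_Mapping.lookup f k"
  by (simp add: Wdeg_def lookup_mapp when_def in_keys_iff)

lemma Wdeg_add [simp]: "Wdeg (f + g) = Wdeg f + Wdeg g"
  by (rule poly_mapping_eqI) (simp add: lookup_Wdeg lookup_add algebra_simps)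

lemma Wdeg_Wsmult [simp]: "Wdeg (Wsmult c f) = Wsmult c (Wdeg f)"
  by (rule poly_mapping_eqI) (simp add: lookup_Wdeg algebra_simps)

lemma Wdeg_diff [simp]: "Wdeg (f - g) = Wdeg f - Wdeg g"
  by (rule poly_mapping_eqI) (simp add: lookup_Wdeg lookup_minus algebra_simps)

lemma Wdeg_Wbasis: "Wdeg (Wbasis a i) = Wsmult (of_int a) (Wbasis a i)"
  by (rule poly_mapping_eqI) (simp add: lookup_Wdeg lookup_Wbasis)

lemma Wdeg_Wderiv: "Wdeg (Wderiv f) = Wderiv (Wdeg f)"
  by (rule poly_mapping_eqI) (auto simp: lookup_Wdeg lookup_Wderiv algebra_simps)

lemma Wdeg_mult: "Wdeg (f * g) = f * Wdeg g + Wdeg f * g"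
  by (rule Wstar_Leibniz_rule) (simp_all add: Wdeg_Wbasis Wsmult_add_left[symmetric] add.commute)

lemma Wdeg_Wbracket: "Wdeg (Wbracket u v) = Wbracket (Wdeg u) v + Wbracket u (Wdeg v)"
  by (simp add: Wbracket_def Wdeg_mult Wdeg_Wderiv algebra_simps)

lemma
  assumes "is_derivation D"
  shows derivation_add: "D (u + v) = D u + D v"
    and derivation_Wsmult: "D (Wsmult c u) = Wsmult c (D u)"
    and derivation_Wbracket: "D (Wbracket u v) = Wbracket (D u) v + Wbracket u (D v)"
    and derivation_zero: "D 0 = 0"
proof -
  have add: "D (u + v) = D u + D v" for u v
    using assms by (simp add: is_derivation_def)
  then show "D (u + v) = D u + D v" .
  show "D (Wsmult c u) = Wsmult c (D u)" "D (Wbracket u v) = Wbracket (D u) v + Wbracket u (D v)"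
    using assms by (simp_all add: is_derivation_def)
  show "D 0 = 0"
    using add[of 0 0] by simp
qed

lemma is_derivation_Wbracket: "is_derivation (Wbracket u)"
  unfolding is_derivation_def by (intro conjI allI Wbracket_add_right Wbracket_Wsmult_right Wbracket_jacobi)

lemma is_derivation_Wderiv: "is_derivation Wderiv"
  using is_derivation_Wbracket[of 1] by (simp add: Wbracket_one_left[abs_def])

lemma is_derivation_Wdeg: "is_derivation Wdeg"
  unfolding is_derivation_def by (intro conjI allI Wdeg_add Wdeg_Wsmult Wdeg_Wbracket)

lemma is_derivation_add:
  assumes "is_derivation D1" "is_derivation D2"
  shows "is_derivation (\<lambda>v. D1 v + D2 v)"
  unfolding is_derivation_def
  by (simp add: derivation_add[OF assms(1)] derivation_add[OF assms(2)] derivation_Wsmult[OF assms(1)]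
      derivation_Wsmult[OF assms(2)] derivation_Wbracket[OF assms(1)] derivation_Wbracket[OF assms(2)])

lemma is_derivation_diff:
  assumes "is_derivation D1" "is_derivation D2"
  shows "is_derivation (\<lambda>v. D1 v - D2 v)"
  unfolding is_derivation_def
  by (simp add: derivation_add[OF assms(1)] derivation_add[OF assms(2)] derivation_Wsmult[OF assms(1)]
      derivation_Wsmult[OF assms(2)] derivation_Wbracket[OF assms(1)] derivation_Wbracket[OF assms(2)])

lemma is_derivation_Wsmult:
  assumes "is_derivation D"
  shows "is_derivation (\<lambda>v. Wsmult c (D v))"
  unfolding is_derivation_def
  by (simp add: derivation_add[OF assms] derivation_Wsmult[OF assms] derivation_Wbracket[OF assms] mult.commute)

lemma lookup_eq_0_if_nonzero_propagates:
  fixes w :: "('k \<times> nat) \<Rightarrow>\<^sub>0 'b::zero"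
  assumes step: "\<And>n. Poly_Mapping.lookup w (b, n) \<noteq> 0 \<Longrightarrow> Poly_Mapping.lookup w (b, Suc n) \<noteq> 0"
  shows "Poly_Mapping.lookup w (b, j) = 0"
proof (rule ccontr)
  assume "Poly_Mapping.lookup w (b, j) \<noteq> 0"
  then have "Poly_Mapping.lookup w (b, j + n) \<noteq> 0" for n
    by (induction n) (simp_all add: step)
  then have "range (\<lambda>n. (b, j + n)) \<subseteq> Poly_Mapping.keys w"
    by (auto simp: in_keys_iff)
  moreover have "inj (\<lambda>n. (b, j + n))"
    by (simp add: inj_def)
  ultimately have "infinite (Poly_Mapping.keys w)"
    using infinite_iff_countable_subset by blast
  then show False
    by simp
qed

lemma Wderiv_eigenvector:
  fixes w :: "'a::field_char_0 Wstar"
  assumes eigen: "Wderiv w = Wsmult (of_int a) w"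
  shows "w = Wsmult (Poly_Mapping.lookup w (a, 0)) (Wbasis a 0)"
proof -
  let ?w = "Poly_Mapping.lookup w"
  have rec: "of_nat (Suc j) * ?w (b, Suc j) = (of_int a - of_int b) * ?w (b, j)" for b j
    using arg_cong[OF eigen, of "\<lambda>p. Poly_Mapping.lookup p (b, j)"]
    by (simp add: lookup_Wderiv algebra_simps)
  have off_a: "?w (b, j) = 0" if "b \<noteq> a" for b j
  proof (rule lookup_eq_0_if_nonzero_propagates)
    fix n
    assume "?w (b, n) \<noteq> 0"
    moreover have "(of_int a - of_int b :: 'a) \<noteq> 0"
      using that by simp
    ultimately show "?w (b, Suc n) \<noteq> 0"
      using rec[of n b] by (auto simp del: of_nat_Suc)
  qed
  have at_a: "?w (a, Suc j) = 0" for j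
    using rec[of j a] by (simp del: of_nat_Suc)
  show ?thesis
  proof (rule poly_mapping_eqI)
    fix k :: "int \<times> nat"
    obtain b j where k: "k = (b, j)" by (cases k)
    show "?w k = Poly_Mapping.lookup (Wsmult (?w (a, 0)) (Wbasis a 0)) k"
      unfolding k using off_a at_a by (cases j; cases "b = a") (auto simp: lookup_Wbasis)
  qed
qed

lemma Wbasis_in_range_Wderiv: "(Wbasis a i :: 'a::field_char_0 Wstar) \<in> range Wderiv"
proof (cases "a = 0")
  case True
  have "Wderiv (Wsmult (1 / of_nat (Suc i)) (Wbasis a (Suc i)) :: 'a Wstar) = Wbasis a i"
    using True by (simp add: Wderiv_Wbasis del: of_nat_Suc)
  then show ?thesis
    by (metis rangeI)
next
  case False
  show ?thesis
  proof (induction i)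
    case 0
    have "Wderiv (Wsmult (1 / of_int a) (Wbasis a 0) :: 'a Wstar) = Wbasis a 0"
      using False by (simp add: Wderiv_Wbasis)
    then show ?case
      by (metis rangeI)
  next
    case (Suc i)
    then obtain p where p: "Wderiv p = (Wbasis a i :: 'a Wstar)"
      by (metis rangeE)
    have "Wderiv (Wsmult (1 / of_int a) (Wbasis a (Suc i) - Wsmult (of_nat (Suc i)) p) :: 'a Wstar) = Wbasis a (Suc i)"
      using False by (simp add: Wderiv_Wbasis p)
    then show ?case
      by (metis rangeI)
  qed
qed

lemma surj_Wderiv: "surj (Wderiv :: 'a::field_char_0 Wstar \<Rightarrow> 'a Wstar)"
proof -
  have "w \<in> range Wderiv" for w :: "'a Wstar"
  proof (induction w rule: Wstar_induct)
    case zero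
    show ?case
      using Wderiv_zero by (metis rangeI)
  next
    case (add_basis f a i c)
    obtain p where p: "Wderiv p = f"
      using add_basis.IH by (metis rangeE)
    obtain q where q: "Wderiv q = (Wbasis a i :: 'a Wstar)"
      using Wbasis_in_range_Wderiv by (metis rangeE)
    have "Wderiv (p + Wsmult c q) = f + Wsmult c (Wbasis a i)"
      by (simp add: p q)
    then show ?case
      by (metis rangeI)
  qed
  then show ?thesis
    by blast
qed

lemma derivation_vanishes_on_Wbasis:
  fixes E :: "'a::field_char_0 Wstar \<Rightarrow> 'a Wstar"
  assumes der: "is_derivation E"
    and exp: "\<And>a. E (Wbasis a 0) = 0" and x: "E (Wbasis 0 1) = 0"
  shows "E (Wbasis a j) = 0"
proof -
  note E_simps = derivation_add[OF der] derivation_Wsmult[OF der] derivation_Wbracket[OF der]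
  have cancel: "E u = 0" if "E (Wsmult c u) = 0" "c \<noteq> 0" for c u
    using that by (simp add: E_simps Wsmult_eq_0_iff)
  have nonzero: "E (Wbasis b j) = 0" if "b \<noteq> 0" for b j
  proof (induction j)
    case 0
    show ?case by (rule exp)
  next
    case (Suc j)
    have "E (Wbracket (Wbasis 0 1) (Wbasis b j)) = 0"
      using x Suc.IH by (simp add: E_simps)
    then have "E (Wsmult (of_int b) (Wbasis b (Suc j))) = 0"
      using Suc.IH by (simp add: Wbracket_Wbasis E_simps)
    then show ?case
      by (rule cancel) (simp add: that)
  qed
  have zero: "E (Wbasis 0 j) = 0" for j
  proof (induction j)
    case 0
    show ?case by (rule exp)
  next
    case (Suc j)
    have "E (Wbracket (Wbasis 1 0) (Wbasis (-1) (Suc j))) = 0"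
      using exp nonzero[of "-1"] by (simp add: E_simps)
    then have "E (Wsmult (- 2) (Wbasis 0 (Suc j))) = 0"
      using Suc.IH by (simp add: Wbracket_Wbasis E_simps)
    then show ?case
      by (rule cancel) simp
  qed
  show ?thesis
    using nonzero zero by (cases "a = 0") simp_all
qed

lemma derivation_eqI:
  fixes D1 D2 :: "'a::field_char_0 Wstar \<Rightarrow> 'a Wstar"
  assumes "is_derivation D1" "is_derivation D2"
    and "\<And>a. D1 (Wbasis a 0) = D2 (Wbasis a 0)" "D1 (Wbasis 0 1) = D2 (Wbasis 0 1)"
  shows "D1 = D2"
proof
  fix v
  define E where "E v = D1 v - D2 v" for v
  have der: "is_derivation E"
    unfolding E_def[abs_def] using assms(1,2) by (rule is_derivation_diff)
  have "E (Wbasis a j) = 0" for a j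
    using der by (rule derivation_vanishes_on_Wbasis) (use assms(3,4) in \<open>simp_all add: E_def\<close>)
  then have "E v = 0"
    by (induction v rule: Wstar_induct)
      (simp_all add: derivation_zero[OF der] derivation_add[OF der] derivation_Wsmult[OF der])
  then show "D1 v = D2 v"
    by (simp add: E_def)
qed

lemma linear_if_additive_on_distinct:
  fixes f :: "int \<Rightarrow> 'a::ring_1"
  assumes add: "\<And>a b. a \<noteq> b \<Longrightarrow> f (a + b) = f a + f b"
  shows "f a = of_int a * f 1"
proof -
  have f0: "f 0 = 0"
    using add[of 1 0] by simp
  have f_minus_1: "f (- 1) = - f 1"
    using add[of 1 "- 1"] f0 by (simp add: eq_neg_iff_add_eq_0 add.commute)
  show ?thesis
  proof (induction a rule: int_induct[where k = 0])
    case base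
    show ?case by (simp add: f0)
  next
    case (step1 i)
    then show ?case
      using add[of "i + 1" "- 1"] f_minus_1 by (simp add: algebra_simps)
  next
    case (step2 i)
    then show ?case
      using add[of "i - 1" 1] by (simp add: algebra_simps)
  qed
qed

lemma derivation_vanishing_at_one:
  fixes E :: "'a::field_char_0 Wstar \<Rightarrow> 'a Wstar"
  assumes der: "is_derivation E" and one: "E 1 = 0"
  obtains c k where "E = (\<lambda>v. Wsmult c (Wdeg v) + Wsmult k (Wderiv v - Wdeg v))"
proof -
  note E_simps = derivation_add[OF der] derivation_Wsmult[OF der] derivation_Wbracket[OF der]
  have commute: "Wderiv (E v) = E (Wderiv v)" for v
    using derivation_Wbracket[OF der, of 1 v] one by (simp add: Wbracket_one_left)
  define \<mu> where "\<mu> a = Poly_Mapping.lookup (E (Wbasis a 0)) (a, 0)" for a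
  have exp: "E (Wbasis a 0) = Wsmult (\<mu> a) (Wbasis a 0)" for a
    unfolding \<mu>_def by (rule Wderiv_eigenvector) (simp add: commute Wderiv_Wbasis E_simps)
  define k where "k = Poly_Mapping.lookup (E (Wbasis 0 1)) (0, 0)"
  have "E (Wbasis 0 1) = Wsmult k (Wbasis 0 0)"
    unfolding k_def by (rule Wderiv_eigenvector) (simp add: commute Wderiv_Wbasis Wbasis_0_0 one)
  then have x: "E (Wbasis 0 1) = Wsmult k 1"
    by (simp add: Wbasis_0_0)
  have "\<mu> (a + b) = \<mu> a + \<mu> b" if "a \<noteq> b" for a b
  proof -
    have "Poly_Mapping.lookup (E (Wbracket (Wbasis a 0) (Wbasis b 0))) (a + b, 0) =
      Poly_Mapping.lookup (Wbracket (E (Wbasis a 0)) (Wbasis b 0) + Wbracket (Wbasis a 0) (E (Wbasis b 0))) (a + b, 0)"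
      by (simp only: E_simps)
    then have "of_int (b - a) * \<mu> (a + b) = of_int (b - a) * (\<mu> a + \<mu> b)"
      by (simp add: Wbracket_Wbasis exp E_simps lookup_add lookup_Wbasis algebra_simps)
    then show ?thesis
      using that by simp
  qed
  then have \<mu>_linear: "\<mu> a = of_int a * \<mu> 1" for a
    by (rule linear_if_additive_on_distinct)
  have "E = (\<lambda>v. Wsmult (\<mu> 1) (Wdeg v) + Wsmult k (Wderiv v - Wdeg v))"
  proof (rule derivation_eqI[OF der])
    show "is_derivation (\<lambda>v. Wsmult (\<mu> 1) (Wdeg v) + Wsmult k (Wderiv v - Wdeg v))"
      by (intro is_derivation_add is_derivation_Wsmult is_derivation_diff is_derivation_Wdeg is_derivation_Wderiv)
    show "E (Wbasis a 0) = Wsmult (\<mu> 1) (Wdeg (Wbasis a 0)) + Wsmult k (Wderiv (Wbasis a 0) - Wdeg (Wbasis a 0))" for a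
      by (simp add: exp \<mu>_linear[of a] Wdeg_Wbasis Wderiv_Wbasis mult.commute)
    show "E (Wbasis 0 1) = Wsmult (\<mu> 1) (Wdeg (Wbasis 0 1)) + Wsmult k (Wderiv (Wbasis 0 1) - Wdeg (Wbasis 0 1))"
      using x by (simp add: Wdeg_Wbasis Wderiv_Wbasis Wbasis_0_0)
  qed
  then show ?thesis
    by (rule that)
qed

theorem theorem2:
  fixes D :: "'a::field_char_0 Wstar \<Rightarrow> 'a Wstar"
  assumes "is_derivation D"
  shows "\<exists>I S. is_inner_derivation I \<and> is_scalar_derivation S \<and> D = (\<lambda>v. I v + S v)"
proof -
  obtain u where u: "Wderiv u = - D 1"
    using surj_Wderiv by (metis surjD)
  define E where "E v = D v - Wbracket u v" for v
  have "is_derivation E"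
    unfolding E_def[abs_def] using assms is_derivation_Wbracket by (rule is_derivation_diff)
  moreover have "E 1 = 0"
    by (simp add: E_def Wbracket_def u)
  ultimately obtain c k where E: "E = (\<lambda>v. Wsmult c (Wdeg v) + Wsmult k (Wderiv v - Wdeg v))"
    by (rule derivation_vanishing_at_one)
  define I where "I = Wbracket (u + Wsmult k 1)"
  define S where "S v = Wsmult (c - k) (Wdeg v)" for v
  have "is_inner_derivation I"
    by (auto simp: I_def is_inner_derivation_def)
  moreover have "is_derivation S"
    unfolding S_def[abs_def] by (rule is_derivation_Wsmult[OF is_derivation_Wdeg])
  then have "is_scalar_derivation S"
    by (auto simp: is_scalar_derivation_def S_def Wdeg_Wbasis)
  moreover have "D v = I v + S v" for v
    using fun_cong[OF E, of v]
    by (simp add: E_def I_def S_def Wbracket_one_left Wsmult_diff_left algebra_simps)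
  ultimately show ?thesis
    by blast
qed

end
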